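(* Let $A=\langle Q,\delta,\gamma,F\rangle$ be a pomset automaton and let $q\xrightarrow{U}_A q'$ be a trace that is non-trivial, i.e., it is not the case that $U=1$ and $q'=q$. If $q=\bot$ or $q=\top$, then $q'=\bot$.
   Context: Fix a finite alphabet $\Sigma$; pomsets are isomorphism classes of $\Sigma$-labelled posets, $1$ is the empty pomset, $a\in\Sigma$ the one-point pomset, $U\cdot V$ and $U\parallel V$ are sequential and parallel composition, and $\mathsf{Pom}^{\mathsf{sp}}$ is the smallest set containing $1$ and all $a$ closed under both. A pomset automaton (PA) is $A=\langle Q,\delta,\gamma,F\rangle$ with $F\subseteq Q$, $\delta:Q\times\Sigma\to Q$, $\gamma:Q\times Q\times Q\to Q$; every PA has distinguished states $\bot\in Q\setminus F$ and $\top\in F$ with $\delta(\bot,a)=\delta(\top,a)=\bot$ for all $a\in\Sigma$ and $\gamma(\bot,r,s)=\gamma(\top,r,s)=\bot$ for all $r,s\in Q$. The trace relation ${\to_A}\subseteq Q\times\mathsf{Pom}^{\mathsf{sp}}\times Q$ is the smallest relation with: $q\xrightarrow{1}_A q$; $q\xrightarrow{a}_A\delta(q,a)$; $q\xrightarrow{U}_A q''$ and $q''\xrightarrow{V}_A q'$ imply $q\xrightarrow{U\cdot V}_A q'$; $r\xrightarrow{U}_A r'\in F$ and $s\xrightarrow{V}_A s'\in F$ imply $q\xrightarrow{U\parallel V}_A\gamma(q,r,s)$. *)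

theory Defs
  imports Main
begin

text \<open>A labelled poset is represented by a carrier (a set of naturals), a reflexive
partial order on the carrier, and a labelling (only relevant on the carrier).\<close>

type_synonym 'a lposet = "nat set \<times> (nat \<times> nat) set \<times> (nat \<Rightarrow> 'a)"

definition lposet :: "'a lposet \<Rightarrow> bool" where
  "lposet P \<longleftrightarrow> (case P of (C, R, l) \<Rightarrow>
     finite C \<and> R \<subseteq> C \<times> C \<and> (\<forall>x\<in>C. (x, x) \<in> R) \<and> antisym R \<and> trans R)"

definition lp_iso :: "'a lposet \<Rightarrow> 'a lposet \<Rightarrow> bool" where
  "lp_iso P P' \<longleftrightarrow> (case P of (C, R, l) \<Rightarrow> case P' of (C', R', l') \<Rightarrow>
     (\<exists>f. bij_betw f C C' \<and> (\<forall>x\<in>C. \<forall>y\<in>C. (x, y) \<in> R \<longleftrightarrow> (f x, f y) \<in> R')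
          \<and> (\<forall>x\<in>C. l' (f x) = l x)))"

text \<open>A pomset is an isomorphism class of labelled posets.\<close>
type_synonym 'a pomset = "'a lposet set"

definition pom_class :: "'a lposet \<Rightarrow> 'a pomset" where
  "pom_class P = {P'. lposet P' \<and> lp_iso P P'}"

definition lp_empty :: "'a lposet" where
  "lp_empty = ({}, {}, \<lambda>_. undefined)"

definition lp_atom :: "'a \<Rightarrow> 'a lposet" where
  "lp_atom a = ({0}, {(0, 0)}, \<lambda>_. a)"

definition lp_inl :: "nat \<Rightarrow> nat" where "lp_inl n = 2 * n"
definition lp_inr :: "nat \<Rightarrow> nat" where "lp_inr n = 2 * n + 1"

definition lp_par :: "'a lposet \<Rightarrow> 'a lposet \<Rightarrow> 'a lposet" where
  "lp_par P Q = (case P of (C1, R1, l1) \<Rightarrow> case Q of (C2, R2, l2) \<Rightarrow>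
     (lp_inl ` C1 \<union> lp_inr ` C2,
      map_prod lp_inl lp_inl ` R1 \<union> map_prod lp_inr lp_inr ` R2,
      \<lambda>n. if even n then l1 (n div 2) else l2 (n div 2)))"

definition lp_seq :: "'a lposet \<Rightarrow> 'a lposet \<Rightarrow> 'a lposet" where
  "lp_seq P Q = (case P of (C1, R1, l1) \<Rightarrow> case Q of (C2, R2, l2) \<Rightarrow>
     (lp_inl ` C1 \<union> lp_inr ` C2,
      map_prod lp_inl lp_inl ` R1 \<union> map_prod lp_inr lp_inr ` R2
        \<union> (lp_inl ` C1 \<times> lp_inr ` C2),
      \<lambda>n. if even n then l1 (n div 2) else l2 (n div 2)))"

definition pom_one :: "'a pomset" ("\<one>\<^sub>P") where
  "pom_one = pom_class lp_empty"

definition pom_atom :: "'a \<Rightarrow> 'a pomset" where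
  "pom_atom a = pom_class (lp_atom a)"

definition pom_seq :: "'a pomset \<Rightarrow> 'a pomset \<Rightarrow> 'a pomset" (infixl "\<cdot>\<^sub>P" 70) where
  "U \<cdot>\<^sub>P V = (\<Union>P\<in>U. \<Union>Q\<in>V. pom_class (lp_seq P Q))"

definition pom_par :: "'a pomset \<Rightarrow> 'a pomset \<Rightarrow> 'a pomset" (infixl "\<parallel>\<^sub>P" 65) where
  "U \<parallel>\<^sub>P V = (\<Union>P\<in>U. \<Union>Q\<in>V. pom_class (lp_par P Q))"

inductive_set sp_pomsets :: "'a pomset set" where
  one: "\<one>\<^sub>P \<in> sp_pomsets"
| atom: "pom_atom a \<in> sp_pomsets"
| seq: "U \<in> sp_pomsets \<Longrightarrow> V \<in> sp_pomsets \<Longrightarrow> U \<cdot>\<^sub>P V \<in> sp_pomsets"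
| par: "U \<in> sp_pomsets \<Longrightarrow> V \<in> sp_pomsets \<Longrightarrow> U \<parallel>\<^sub>P V \<in> sp_pomsets"

text \<open>A PA over alphabet 'a (finite) with state type 's (Q = UNIV), given by
 delta, gamma, F and the distinguished states qbot and qtop.\<close>
definition is_PA :: "('s \<Rightarrow> 'a::finite \<Rightarrow> 's) \<Rightarrow> ('s \<Rightarrow> 's \<Rightarrow> 's \<Rightarrow> 's) \<Rightarrow> 's set
    \<Rightarrow> 's \<Rightarrow> 's \<Rightarrow> bool" where
  "is_PA \<delta> \<gamma> F qbot qtop \<longleftrightarrow> qbot \<notin> F \<and> qtop \<in> F
     \<and> (\<forall>a. \<delta> qbot a = qbot \<and> \<delta> qtop a = qbot)
     \<and> (\<forall>r s. \<gamma> qbot r s = qbot \<and> \<gamma> qtop r s = qbot)"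

inductive PA_trace :: "('s \<Rightarrow> 'a::finite \<Rightarrow> 's) \<Rightarrow> ('s \<Rightarrow> 's \<Rightarrow> 's \<Rightarrow> 's) \<Rightarrow> 's set
    \<Rightarrow> 's \<Rightarrow> 'a pomset \<Rightarrow> 's \<Rightarrow> bool"
  for \<delta> \<gamma> F where
  unit: "PA_trace \<delta> \<gamma> F q \<one>\<^sub>P q"
| atom: "PA_trace \<delta> \<gamma> F q (pom_atom a) (\<delta> q a)"
| seq: "PA_trace \<delta> \<gamma> F q U q'' \<Longrightarrow> PA_trace \<delta> \<gamma> F q'' V q'
          \<Longrightarrow> PA_trace \<delta> \<gamma> F q (U \<cdot>\<^sub>P V) q'"
| par: "PA_trace \<delta> \<gamma> F r U r' \<Longrightarrow> r' \<in> F \<Longrightarrow> PA_trace \<delta> \<gamma> F s V s' \<Longrightarrow> s' \<in> F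
          \<Longrightarrow> PA_trace \<delta> \<gamma> F q (U \<parallel>\<^sub>P V) (\<gamma> q r s)"

end

theory Submission
  imports Defs
begin

text \<open>Every transition out of \<open>\<bottom>\<close> or \<open>\<top>\<close> other than the unit trace leads to \<open>\<bottom>\<close>, and \<open>\<bottom>\<close>
  is a sink. So a trace from \<open>\<top>\<close> avoids \<open>\<bottom>\<close> only if it is built from unit traces by
  sequential composition, and such a trace carries \<open>1\<close> because \<open>1 \<cdot> 1 = 1\<close>.\<close>

lemma pom_class_empty_carrier:
  assumes "fst P = {}"
  shows "pom_class (P :: 'a lposet) = {P'. \<exists>l. P' = ({}, {}, l)}"
proof -
  obtain R l where P: "P = ({}, R, l)" using assms by (cases P) auto
  show ?thesis
  proof (intro set_eqI iffI)
    fix P' :: "'a lposet"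
    assume "P' \<in> pom_class P"
    then have "lposet P'" and iso: "lp_iso P P'" by (auto simp: pom_class_def)
    obtain C' R' l' where P': "P' = (C', R', l')" by (cases P') auto
    from iso have "C' = {}" unfolding P P' lp_iso_def by (auto simp: bij_betw_def)
    with \<open>lposet P'\<close> have "R' = {}" unfolding P' lposet_def by auto
    with P' \<open>C' = {}\<close> show "P' \<in> {P'. \<exists>l. P' = ({}, {}, l)}" by auto
  next
    fix P' :: "'a lposet"
    assume "P' \<in> {P'. \<exists>l. P' = ({}, {}, l)}"
    then obtain l' where P': "P' = ({}, {}, l')" by auto
    have "lposet P'" unfolding P' lposet_def by (auto simp: antisym_def trans_def)
    moreover have "lp_iso P P'" unfolding P P' lp_iso_def by (auto simp: bij_betw_def)
    ultimately show "P' \<in> pom_class P" by (simp add: pom_class_def)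
  qed
qed

lemma pom_one_conv: "(\<one>\<^sub>P :: 'a pomset) = {P. \<exists>l. P = ({}, {}, l)}"
  unfolding pom_one_def by (rule pom_class_empty_carrier) (simp add: lp_empty_def)

lemma pom_seq_one_one: "\<one>\<^sub>P \<cdot>\<^sub>P \<one>\<^sub>P = \<one>\<^sub>P"
proof -
  have "pom_class (lp_seq P Q) = \<one>\<^sub>P" if "P \<in> \<one>\<^sub>P" and "Q \<in> \<one>\<^sub>P" for P Q :: "'a lposet"
    using that by (subst pom_class_empty_carrier) (auto simp: pom_one_conv lp_seq_def)
  moreover have "({}, {}, undefined) \<in> (\<one>\<^sub>P :: 'a pomset)" by (simp add: pom_one_conv)
  ultimately show ?thesis unfolding pom_seq_def by blast
qed

lemma PA_trace_from_bot:
  assumes "is_PA \<delta> \<gamma> F qbot qtop" and "PA_trace \<delta> \<gamma> F qbot U q'"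
  shows "q' = qbot"
proof -
  have "q = qbot \<Longrightarrow> q' = qbot" if "PA_trace \<delta> \<gamma> F q U q'" for q q' U
    using that by induction (use assms(1) in \<open>auto simp: is_PA_def\<close>)
  with assms(2) show ?thesis by blast
qed

lemma PA_trace_from_top:
  assumes PA: "is_PA \<delta> \<gamma> F qbot qtop" and "PA_trace \<delta> \<gamma> F qtop U q'"
  shows "q' = qbot \<or> (U = \<one>\<^sub>P \<and> q' = qtop)"
proof -
  have "q = qtop \<Longrightarrow> q' = qbot \<or> (U = \<one>\<^sub>P \<and> q' = qtop)"
    if "PA_trace \<delta> \<gamma> F q U q'" for q q' U
    using that
  proof induction
    case (seq q U q'' V q')
    show ?case
    proof (cases "q'' = qbot")
      case True
      with seq.hyps(2) show ?thesis using PA_trace_from_bot[OF PA] by blast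
    next
      case False
      with seq.IH(1) seq.prems have "U = \<one>\<^sub>P" and "q'' = qtop" by auto
      with seq.IH(2) show ?thesis by (auto simp: pom_seq_one_one)
    qed
  qed (use PA in \<open>auto simp: is_PA_def\<close>)
  with assms(2) show ?thesis by blast
qed

theorem mainTheorem5:
  fixes \<delta> :: "'s \<Rightarrow> 'a::finite \<Rightarrow> 's" and \<gamma> :: "'s \<Rightarrow> 's \<Rightarrow> 's \<Rightarrow> 's"
    and F :: "'s set" and qbot qtop q q' :: 's and U :: "'a pomset"
  assumes "is_PA \<delta> \<gamma> F qbot qtop"
    and "PA_trace \<delta> \<gamma> F q U q'"
    and "\<not> (U = \<one>\<^sub>P \<and> q' = q)"
    and "q = qbot \<or> q = qtop"
  shows "q' = qbot"
  using assms(4)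
proof
  assume "q = qbot"
  with assms(1,2) show ?thesis using PA_trace_from_bot by metis
next
  assume "q = qtop"
  with assms(2,3) show ?thesis using PA_trace_from_top[OF assms(1)] by auto
qed

end
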